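(* Let $\varphi\in C^\infty(\mathbb{R}^3)$ and $\delta=(\bar\delta,\delta_3)\in[0,1]^2$. Then the function $$\mathcal{Q}_{\rho,\delta}\varphi(x):=\int_{\mathbb{R}^3}Q_\rho(z)\,\varphi(x-T_\delta z)\,dz,\qquad x\in\mathbb{R}^3,$$ belongs to $C^\infty(\mathbb{R}^3)$. Moreover, $\nabla\circ\mathcal{Q}_{\rho,\delta}=\mathcal{Q}_{\rho,\delta}\circ\nabla$ on $C^\infty(\mathbb{R}^3)$ and $\operatorname{div}\circ\mathcal{Q}_{\rho,\delta}=\mathcal{Q}_{\rho,\delta}\circ\operatorname{div}$ on $C^\infty(\mathbb{R}^3;\mathbb{R}^3)$ (with $\mathcal{Q}_{\rho,\delta}$ acting componentwise), and, writing $D_{\rho,\delta}:=\nabla\circ\mathcal{Q}_{\rho,\delta}$ and $\mathrm{Div}_{\rho,\delta}:=\operatorname{div}\circ\mathcal{Q}_{\rho,\delta}$, the integration by parts formula $$\int_{\mathbb{R}^3}D_{\rho,\delta}\varphi\cdot\psi\,dx=-\int_{\mathbb{R}^3}\varphi\,\mathrm{Div}_{\rho,\delta}\psi\,dx$$ holds for all $\varphi\in C_c^\infty(\mathbb{R}^3)$ and $\psi\in C_c^\infty(\mathbb{R}^3;\mathbb{R}^3)$.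
   Context: For $r=(\bar r,r_3)\in[0,\infty)^2$ let $T_r$ be the diagonal matrix $\mathrm{diag}(\bar r,\bar r,r_3)$. The kernel $\rho:\mathbb{R}^3\setminus\{0\}\to[0,\infty)$ is radial, $\rho(z)=\rho^{\rm rad}(|z|)$, and satisfies the following for some $\eta_0>0$, $\nu>0$, $0<\sigma\le\gamma<1$: (H0) $\inf_{B_{\eta_0}(0)}\rho>0$, $\operatorname{supp}\rho=\overline{B_1(0)}$ and $\int_{\mathbb{R}^3}\rho\,dz=3$; (H1) with $f_\rho(r):=r\rho^{\rm rad}(r)$, the map $r\mapsto r^\nu f_\rho(r)$ is non-increasing on $(0,\infty)$; (H2) $f_\rho$ is smooth on $(0,\infty)$ and for each $k\in\mathbb{N}$ there is $C_k>0$ with $|f_\rho^{(k)}(r)|\le C_kf_\rho(r)/r^k$ for $r\in(0,\eta_0)$; (H3) $r\mapsto r^{2+\sigma}\rho^{\rm rad}(r)$ is almost non-increasing on $(0,\eta_0)$; (H4) $r\mapsto r^{2+\gamma}\rho^{\rm rad}(r)$ is almost non-decreasing on $(0,\eta_0)$. Here $f$ is almost non-increasing (resp. non-decreasing) on an interval if there is $C>0$ with $f(t_1)\ge Cf(t_2)$ (resp. $f(t_1)\le Cf(t_2)$) for all $t_1<t_2$ in it. Set $Q_\rho(z):=\int_{|z|}^\infty\frac{\rho^{\rm rad}(t)}{t}\,dt$ for $z\ne0$. *)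

theory Defs
  imports "HOL-Analysis.Analysis"
begin

definition partial :: "3 \<Rightarrow> (real^3 \<Rightarrow> real) \<Rightarrow> real^3 \<Rightarrow> real" where
  "partial i f x = frechet_derivative f (at x) (axis i 1)"

fun Ck :: "nat \<Rightarrow> (real^3 \<Rightarrow> real) \<Rightarrow> bool" where
  "Ck 0 f = continuous_on UNIV f"
| "Ck (Suc k) f = (f differentiable_on UNIV \<and> continuous_on UNIV f \<and> (\<forall>i. Ck k (partial i f)))"

definition smooth3 :: "(real^3 \<Rightarrow> real) \<Rightarrow> bool" where
  "smooth3 f \<longleftrightarrow> (\<forall>k. Ck k f)"

definition smooth3_field :: "(real^3 \<Rightarrow> real^3) \<Rightarrow> bool" where
  "smooth3_field F \<longleftrightarrow> (\<forall>i. smooth3 (\<lambda>x. F x $ i))"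

definition compact_support :: "(real^3 \<Rightarrow> 'b::zero) \<Rightarrow> bool" where
  "compact_support f \<longleftrightarrow> compact (closure {x. f x \<noteq> 0})"

definition grad3 :: "(real^3 \<Rightarrow> real) \<Rightarrow> real^3 \<Rightarrow> real^3" where
  "grad3 f x = (\<chi> i. partial i f x)"

definition div3 :: "(real^3 \<Rightarrow> real^3) \<Rightarrow> real^3 \<Rightarrow> real" where
  "div3 F x = (\<Sum>i\<in>UNIV. partial i (\<lambda>y. F y $ i) x)"

definition Tmat :: "real \<Rightarrow> real \<Rightarrow> real^3 \<Rightarrow> real^3" where
  "Tmat rb r3 z = (\<chi> i. (if i = 3 then r3 else rb) * z $ i)"

definition Qrho :: "(real \<Rightarrow> real) \<Rightarrow> real^3 \<Rightarrow> real" where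
  "Qrho rhorad z = (LINT t:{norm z..}|lborel. rhorad t / t)"

definition Qop :: "(real \<Rightarrow> real) \<Rightarrow> real \<Rightarrow> real \<Rightarrow> (real^3 \<Rightarrow> real) \<Rightarrow> real^3 \<Rightarrow> real" where
  "Qop rhorad db d3 \<phi> x = (LINT z|lborel. Qrho rhorad z * \<phi> (x - Tmat db d3 z))"

definition Qop_vec :: "(real \<Rightarrow> real) \<Rightarrow> real \<Rightarrow> real \<Rightarrow> (real^3 \<Rightarrow> real^3) \<Rightarrow> real^3 \<Rightarrow> real^3" where
  "Qop_vec rhorad db d3 F x = (\<chi> i. Qop rhorad db d3 (\<lambda>y. F y $ i) x)"

definition kernel_hyps :: "(real \<Rightarrow> real) \<Rightarrow> real \<Rightarrow> real \<Rightarrow> real \<Rightarrow> real \<Rightarrow> bool" where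
  "kernel_hyps rhorad \<eta>0 \<nu> \<sigma> \<gamma> \<longleftrightarrow>
     \<eta>0 > 0 \<and> \<nu> > 0 \<and> 0 < \<sigma> \<and> \<sigma> \<le> \<gamma> \<and> \<gamma> < 1 \<and>
     (\<forall>r>0. rhorad r \<ge> 0) \<and>
     \<comment> \<open>(H0)\<close>
     (\<exists>c>0. \<forall>z::real^3. z \<noteq> 0 \<and> norm z < \<eta>0 \<longrightarrow> rhorad (norm z) \<ge> c) \<and>
     closure {z::real^3. z \<noteq> 0 \<and> rhorad (norm z) \<noteq> 0} = cball 0 1 \<and>
     integrable lborel (\<lambda>z::real^3. rhorad (norm z)) \<and>
     (LINT z|lborel. rhorad (norm (z::real^3))) = 3 \<and>
     \<comment> \<open>(H1)\<close>
     (\<forall>r s. 0 < r \<and> r \<le> s \<longrightarrow> s powr \<nu> * (s * rhorad s) \<le> r powr \<nu> * (r * rhorad r)) \<and>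
     \<comment> \<open>(H2)\<close>
     (\<forall>k. \<forall>r>0. (((deriv ^^ k) (\<lambda>t. t * rhorad t)) has_real_derivative
                   ((deriv ^^ Suc k) (\<lambda>t. t * rhorad t)) r) (at r)) \<and>
     (\<forall>k::nat. \<exists>C>0. \<forall>r. 0 < r \<and> r < \<eta>0 \<longrightarrow>
        \<bar>(deriv ^^ k) (\<lambda>t. t * rhorad t) r\<bar> \<le> C * (r * rhorad r) / r ^ k) \<and>
     \<comment> \<open>(H3)\<close>
     (\<exists>C>0. \<forall>t1 t2. 0 < t1 \<and> t1 < t2 \<and> t2 < \<eta>0 \<longrightarrow>
        t1 powr (2 + \<sigma>) * rhorad t1 \<ge> C * (t2 powr (2 + \<sigma>) * rhorad t2)) \<and>
     \<comment> \<open>(H4)\<close>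
     (\<exists>C>0. \<forall>t1 t2. 0 < t1 \<and> t1 < t2 \<and> t2 < \<eta>0 \<longrightarrow>
        t1 powr (2 + \<gamma>) * rhorad t1 \<le> C * (t2 powr (2 + \<gamma>) * rhorad t2))"

end

theory Submission
  imports Defs
begin

(* Q_rho is an even kernel supported in the closed unit ball, and it is integrable: the substitution
   t = s |z| gives Q_rho(z) = int_1^inf rho(s |z|) / s ds, so by Tonelli and the scaling w = s z,
   int Q_rho = int_1^inf s^-4 ds * int rho(|w|) dw < inf.

   For an integrable kernel K supported in a ball and a linear map L, the operator
   g |-> int K(z) g(x - L z) dz commutes with partial derivatives of C^1 functions: the gradient of g
   is uniformly continuous on compact sets, so linearising g inside the integral costs o(|h|)
   uniformly in z. This gives smoothness and the commutation with grad and div. If K is even, Fubini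
   and the substitutions x = y + L z, z -> -z make the operator symmetric on compactly supported
   continuous functions, and together with integration by parts this gives the duality formula. *)

section \<open>Calculus on \<open>\<real>\<^sup>3\<close>\<close>

lemma partial_eq_has_derivative:
  assumes "(f has_derivative D) (at x)"
  shows "partial i f x = D (axis i 1)"
  using frechet_derivative_at[OF assms] by (simp add: partial_def)

lemma has_derivative_grad3:
  fixes g :: "real^3 \<Rightarrow> real"
  assumes "g differentiable (at y)"
  shows "(g has_derivative (\<lambda>h. h \<bullet> grad3 g y)) (at y)"
proof -
  let ?D = "frechet_derivative g (at y)"
  have D: "(g has_derivative ?D) (at y)"
    using assms frechet_derivative_works by blast
  have "?D h = h \<bullet> grad3 g y" for h
  proof -
    have "?D h = ?D (\<Sum>i\<in>UNIV. h $ i *\<^sub>R axis i 1)"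
      using basis_expansion[of h] by (simp add: scalar_mult_eq_scaleR)
    also have "\<dots> = (\<Sum>i\<in>UNIV. h $ i * ?D (axis i 1))"
      using has_derivative_linear[OF D] by (simp add: linear_sum linear_scale)
    finally show ?thesis
      by (simp add: partial_def grad3_def inner_vec_def)
  qed
  then have "?D = (\<lambda>h. h \<bullet> grad3 g y)"
    by (rule ext)
  with D show ?thesis
    by simp
qed

lemma partial_eq_0_outside_ball:
  fixes h :: "real^3 \<Rightarrow> real"
  assumes "\<And>x. norm x > S \<Longrightarrow> h x = 0" and "norm z > S"
  shows "partial i h z = 0"
proof -
  have "(h has_derivative (\<lambda>_. 0)) (at z)"
    by (rule has_derivative_transform_within_open[where f="\<lambda>_. 0" and s="- cball 0 S"])
       (use assms in \<open>auto simp: open_Compl\<close>)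
  then show ?thesis
    by (simp add: partial_eq_has_derivative)
qed

lemma partial_mult:
  fixes f g :: "real^3 \<Rightarrow> real"
  assumes "f differentiable (at y)" "g differentiable (at y)"
  shows "partial i (\<lambda>x. f x * g x) y = f y * partial i g y + partial i f y * g y"
  using partial_eq_has_derivative[OF has_derivative_mult[OF has_derivative_grad3[OF assms(1)]
      has_derivative_grad3[OF assms(2)]]]
  by (simp add: inner_axis' grad3_def)

lemma linearization_bound_grad3:
  fixes g :: "real^3 \<Rightarrow> real"
  assumes "\<And>y. g differentiable (at y)"
    and "\<And>w. w \<in> ball a r \<Longrightarrow> dist (grad3 g w) (grad3 g a) \<le> e"
    and "norm h < r"
  shows "\<bar>g (a + h) - g a - h \<bullet> grad3 g a\<bar> \<le> e * norm h"
proof -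
  have "norm (g (a + h) - g a - (a + h - a) \<bullet> grad3 g a) \<le> norm (a + h - a) * e"
  proof (rule differentiable_bound_linearization[where S="ball a r" and f'="\<lambda>w h. h \<bullet> grad3 g w"])
    fix t :: real assume "t \<in> {0..1}"
    then have "norm (t *\<^sub>R h) \<le> norm h"
      by (auto intro: mult_left_le_one_le)
    then show "a + t *\<^sub>R (a + h - a) \<in> ball a r"
      using assms(3) by (simp add: dist_norm)
  next
    fix w assume "w \<in> ball a r"
    show "(g has_derivative (\<lambda>h. h \<bullet> grad3 g w)) (at w within ball a r)"
      using has_derivative_grad3[OF assms(1)] has_derivative_at_withinI by blast
    have "onorm (\<lambda>h. h \<bullet> (grad3 g w - grad3 g a)) \<le> norm (grad3 g w - grad3 g a)"
      by (rule onorm_le) (simp add: Cauchy_Schwarz_ineq2 mult.commute)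
    also have "\<dots> \<le> e"
      using assms(2)[OF \<open>w \<in> ball a r\<close>] by (simp add: dist_norm)
    finally show "onorm ((\<lambda>h. h \<bullet> grad3 g w) - (\<lambda>h. h \<bullet> grad3 g a)) \<le> e"
      by (simp add: fun_diff_def inner_diff_right)
  qed (use assms(3) le_less_trans[OF norm_ge_zero] in auto)
  then show ?thesis
    by (simp add: mult.commute)
qed

lemma Ck_continuous_on: "Ck k f \<Longrightarrow> continuous_on UNIV f"
  by (cases k) simp_all

lemma Ck_Suc_differentiable: "Ck (Suc k) f \<Longrightarrow> f differentiable (at y)"
  by (simp add: differentiable_on_def)

lemma Ck_Suc_continuous_on_partial: "Ck (Suc k) f \<Longrightarrow> continuous_on UNIV (partial i f)"
  using Ck_continuous_on[of k "partial i f"] by simp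

lemma compact_support_imp_vanishing:
  fixes f :: "real^3 \<Rightarrow> 'b::real_normed_vector"
  assumes "compact_support f"
  obtains S where "\<And>x. norm x > S \<Longrightarrow> f x = 0"
proof -
  obtain S where S: "closure {x. f x \<noteq> 0} \<subseteq> ball 0 S"
    using bounded_subset_ballD[OF compact_imp_bounded] assms unfolding compact_support_def by blast
  show ?thesis
  proof (rule that)
    fix x :: "real^3"
    assume "norm x > S"
    with S have "x \<notin> closure {x. f x \<noteq> 0}"
      by auto
    then show "f x = 0"
      using closure_subset[of "{x. f x \<noteq> 0}"] by blast
  qed
qed

lemma integrable_vanishing_outside_ball:
  fixes f :: "'a::euclidean_space \<Rightarrow> real"
  assumes "continuous_on UNIV f" and "\<And>x. norm x > S \<Longrightarrow> f x = 0"
  shows "integrable lborel f"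
proof -
  have "integrable lborel (\<lambda>x. indicator (cball 0 S) x *\<^sub>R f x)"
    by (rule borel_integrable_compact) (auto intro: continuous_on_subset[OF assms(1)])
  moreover have "(\<lambda>x. indicator (cball 0 S) x *\<^sub>R f x) = f"
  proof
    fix x
    show "indicator (cball 0 S) x *\<^sub>R f x = f x"
      using assms(2)[of x] by (cases "norm x > S") (auto simp: indicator_def)
  qed
  ultimately show ?thesis
    by simp
qed

lemma bounded_vanishing_outside_ball:
  fixes f :: "'a::euclidean_space \<Rightarrow> real"
  assumes "continuous_on UNIV f" and "\<And>x. norm x > S \<Longrightarrow> f x = 0"
  obtains M where "\<And>y. \<bar>f y\<bar> \<le> M"
proof -
  obtain M where "M \<ge> 0" and M: "\<And>y. y \<in> cball 0 S \<Longrightarrow> norm (f y) \<le> M"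
    by (rule continuous_on_compact_bound[OF compact_cball[of 0 S] continuous_on_subset[OF assms(1) subset_UNIV]]) blast
  show ?thesis
  proof (rule that)
    fix y
    show "\<bar>f y\<bar> \<le> M"
      using assms(2)[of y] M[of y] \<open>M \<ge> 0\<close> by (cases "norm y > S") auto
  qed
qed

lemma integrable_indicator_cball:
  "integrable lborel (indicator (cball (0::'a::euclidean_space) r) :: 'a \<Rightarrow> real)"
  by (rule integrable_real_indicator) (simp, rule emeasure_compact_finite[OF compact_cball])

lemma integral_lborel_translate:
  fixes f :: "'a::euclidean_space \<Rightarrow> real"
  assumes "f \<in> borel_measurable borel"
  shows "(LINT x|lborel. f (c + x)) = (LINT x|lborel. f x)"
proof -
  have "(LINT x|lborel. f x) = (LINT x|distr lborel borel ((+) c). f x)"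
    by (simp add: lborel_distr_plus)
  also have "\<dots> = (LINT x|lborel. f (c + x))"
    by (rule integral_distr) (use assms in auto)
  finally show ?thesis ..
qed

lemma integral_lborel_reflect:
  fixes f :: "'a::euclidean_space \<Rightarrow> real"
  assumes "f \<in> borel_measurable borel"
  shows "(LINT x|lborel. f (- x)) = (LINT x|lborel. f x)"
proof -
  have "distr lborel borel uminus = (lborel :: 'a measure)"
    using lborel_affine[of "-1::real" "0::'a"] by (simp add: density_1)
  then have "(LINT x|lborel. f x) = (LINT x|distr lborel borel uminus. f x)"
    by simp
  also have "\<dots> = (LINT x|lborel. f (- x))"
    by (rule integral_distr) (use assms in auto)
  finally show ?thesis ..
qed

section \<open>Integral operators with compactly supported kernels\<close>

definition kernel_op ::
    "(real^3 \<Rightarrow> real) \<Rightarrow> (real^3 \<Rightarrow> real^3) \<Rightarrow> (real^3 \<Rightarrow> real) \<Rightarrow> real^3 \<Rightarrow> real" where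
  "kernel_op K L g x = (LINT z|lborel. K z * g (x - L z))"

locale compact_kernel =
  fixes K :: "real^3 \<Rightarrow> real" and L :: "real^3 \<Rightarrow> real^3" and R :: real
  assumes integrable_K: "integrable lborel K"
    and K_eq_0: "\<And>z. norm z > R \<Longrightarrow> K z = 0"
    and bounded_linear_L: "bounded_linear L"
begin

lemma borel_measurable_K [measurable]: "K \<in> borel_measurable borel"
  using borel_measurable_integrable[OF integrable_K] by simp

lemma continuous_on_shift:
  assumes "continuous_on UNIV g"
  shows "continuous_on UNIV (\<lambda>z. g (x - L z))"
  by (rule continuous_on_compose2[OF assms])
     (auto intro!: continuous_intros linear_continuous_on[OF bounded_linear_L])

lemma integrable_kernel_integrand:
  assumes "continuous_on UNIV g"
  shows "integrable lborel (\<lambda>z. K z * g (x - L z))"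
proof -
  have shift: "continuous_on UNIV (\<lambda>z. g (x - L z))"
    using continuous_on_shift[OF assms] .
  obtain M where "M \<ge> 0" and M: "\<And>z. z \<in> cball 0 R \<Longrightarrow> norm (g (x - L z)) \<le> M"
    by (rule continuous_on_compact_bound[OF compact_cball[of 0 R] continuous_on_subset[OF shift subset_UNIV]]) blast
  have bound: "\<bar>K z * g (x - L z)\<bar> \<le> \<bar>M * K z\<bar>" for z
  proof (cases "norm z > R")
    case False
    then have "\<bar>g (x - L z)\<bar> \<le> M"
      using M[of z] by simp
    then have "\<bar>K z\<bar> * \<bar>g (x - L z)\<bar> \<le> \<bar>K z\<bar> * M"
      by (simp add: mult_left_mono)
    then show ?thesis
      using \<open>M \<ge> 0\<close> by (simp add: abs_mult mult.commute)
  qed (simp add: K_eq_0)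
  show ?thesis
  proof (rule Bochner_Integration.integrable_bound[where f="\<lambda>z. M * K z"])
    show "integrable lborel (\<lambda>z. M * K z)"
      using integrable_K by simp
    show "(\<lambda>z. K z * g (x - L z)) \<in> borel_measurable lborel"
      using borel_measurable_continuous_onI[OF shift] by simp
    show "AE z in lborel. norm (K z * g (x - L z)) \<le> norm (M * K z)"
      using bound by simp
  qed
qed

lemma kernel_op_add:
  assumes "continuous_on UNIV f" "continuous_on UNIV g"
  shows "kernel_op K L (\<lambda>y. f y + g y) x = kernel_op K L f x + kernel_op K L g x"
  unfolding kernel_op_def distrib_left
  by (intro Bochner_Integration.integral_add integrable_kernel_integrand assms)

lemma kernel_op_cmult: "kernel_op K L (\<lambda>y. c * f y) x = c * kernel_op K L f x"
  unfolding kernel_op_def by (simp add: mult.left_commute)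

lemma kernel_op_sum:
  assumes "\<And>i. i \<in> I \<Longrightarrow> continuous_on UNIV (f i)"
  shows "kernel_op K L (\<lambda>y. \<Sum>i\<in>I. f i y) x = (\<Sum>i\<in>I. kernel_op K L (f i) x)"
  unfolding kernel_op_def sum_distrib_left
  by (intro Bochner_Integration.integral_sum integrable_kernel_integrand assms)

lemma kernel_op_diff_le:
  assumes g: "continuous_on UNIV g" and g': "continuous_on UNIV g'"
    and close: "\<And>z. norm z \<le> R \<Longrightarrow> \<bar>g (x - L z) - g' (x' - L z)\<bar> \<le> e"
  shows "\<bar>kernel_op K L g x - kernel_op K L g' x'\<bar> \<le> e * (LINT z|lborel. \<bar>K z\<bar>)"
proof -
  have "kernel_op K L g x - kernel_op K L g' x' = (LINT z|lborel. K z * g (x - L z) - K z * g' (x' - L z))"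
    unfolding kernel_op_def
    by (intro Bochner_Integration.integral_diff[symmetric] integrable_kernel_integrand g g')
  also have "\<bar>\<dots>\<bar> \<le> (LINT z|lborel. \<bar>K z * g (x - L z) - K z * g' (x' - L z)\<bar>)"
    by (rule integral_abs_bound)
  also have "\<dots> \<le> (LINT z|lborel. e * \<bar>K z\<bar>)"
  proof (rule integral_mono)
    show "integrable lborel (\<lambda>z. \<bar>K z * g (x - L z) - K z * g' (x' - L z)\<bar>)"
      by (intro integrable_abs Bochner_Integration.integrable_diff integrable_kernel_integrand g g')
    show "integrable lborel (\<lambda>z. e * \<bar>K z\<bar>)"
      using integrable_K by simp
    fix z
    show "\<bar>K z * g (x - L z) - K z * g' (x' - L z)\<bar> \<le> e * \<bar>K z\<bar>"
    proof (cases "norm z > R")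
      case False
      then have "\<bar>K z\<bar> * \<bar>g (x - L z) - g' (x' - L z)\<bar> \<le> \<bar>K z\<bar> * e"
        using close by (intro mult_left_mono) auto
      then show ?thesis
        by (simp add: abs_mult mult.commute right_diff_distrib[symmetric])
    qed (simp add: K_eq_0)
  qed
  also have "\<dots> = e * (LINT z|lborel. \<bar>K z\<bar>)"
    by simp
  finally show ?thesis .
qed

lemma shift_mem_cball:
  assumes "norm z \<le> R" and "dist x x0 \<le> 1"
  shows "x - L z \<in> cball 0 (norm x0 + 1 + onorm L * R)"
proof -
  have "norm (L z) \<le> onorm L * norm z"
    by (rule onorm[OF bounded_linear_L])
  also have "\<dots> \<le> onorm L * R"
    by (rule mult_left_mono[OF assms(1) onorm_pos_le[OF bounded_linear_L]])
  finally have "norm (L z) \<le> onorm L * R" .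
  moreover have "norm x \<le> norm x0 + 1"
    using assms(2) norm_triangle_sub[of x x0] by (simp add: dist_norm)
  ultimately show ?thesis
    using norm_triangle_ineq4[of x "L z"] by simp
qed

lemma shift_uniformly_continuous:
  fixes f :: "real^3 \<Rightarrow> 'b::metric_space"
  assumes "continuous_on UNIV f" and "e > 0"
  obtains d where "d > 0" "d \<le> 1"
    and "\<And>z x y. norm z \<le> R \<Longrightarrow> dist x c \<le> 1 \<Longrightarrow> dist y c \<le> 1 \<Longrightarrow> dist x y < d \<Longrightarrow>
      dist (f (x - L z)) (f (y - L z)) < e"
proof -
  define C where "C = cball (0::real^3) (norm c + 1 + onorm L * R)"
  have "uniformly_continuous_on C f"
    unfolding C_def by (intro compact_uniformly_continuous continuous_on_subset[OF assms(1)]) auto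
  then obtain d where d: "d > 0" "\<forall>y\<in>C. \<forall>y'\<in>C. dist y' y < d \<longrightarrow> dist (f y') (f y) < e"
    using assms(2) unfolding uniformly_continuous_on_def by blast
  show ?thesis
  proof (rule that[of "min d 1"])
    fix z x y :: "real^3"
    assume "norm z \<le> R" "dist x c \<le> 1" "dist y c \<le> 1" "dist x y < min d 1"
    then have "x - L z \<in> C" "y - L z \<in> C" "dist (x - L z) (y - L z) < d"
      using shift_mem_cball unfolding C_def by (auto simp: dist_norm)
    then show "dist (f (x - L z)) (f (y - L z)) < e"
      using d(2) by blast
  qed (use d(1) in auto)
qed

lemma continuous_on_kernel_op:
  assumes g: "continuous_on UNIV g"
  shows "continuous_on UNIV (kernel_op K L g)"
proof -
  define N where "N = (LINT z|lborel. \<bar>K z\<bar>)"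
  have "N \<ge> 0"
    unfolding N_def by simp
  have "\<exists>d>0. \<forall>x. dist x x0 < d \<longrightarrow> dist (kernel_op K L g x) (kernel_op K L g x0) < e"
    if "e > 0" for x0 e
  proof -
    have "e / (N + 1) > 0"
      using \<open>e > 0\<close> \<open>N \<ge> 0\<close> by simp
    then obtain d where "d > 0" "d \<le> 1"
      and close: "\<And>z x y. norm z \<le> R \<Longrightarrow> dist x x0 \<le> 1 \<Longrightarrow> dist y x0 \<le> 1 \<Longrightarrow> dist x y < d \<Longrightarrow>
        dist (g (x - L z)) (g (y - L z)) < e / (N + 1)"
      by (rule shift_uniformly_continuous[OF g, where c=x0]) blast
    show ?thesis
    proof (intro exI[of _ d] conjI allI impI)
      fix x
      assume "dist x x0 < d"
      with \<open>d \<le> 1\<close> have "\<bar>g (x - L z) - g (x0 - L z)\<bar> \<le> e / (N + 1)" if "norm z \<le> R" for z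
        using close[OF that, of x x0] by (simp add: dist_real_def)
      then have "\<bar>kernel_op K L g x - kernel_op K L g x0\<bar> \<le> e / (N + 1) * N"
        by (rule kernel_op_diff_le[OF g g, folded N_def])
      also have "\<dots> < e"
        using \<open>e > 0\<close> \<open>N \<ge> 0\<close> by (simp add: field_simps)
      finally show "dist (kernel_op K L g x) (kernel_op K L g x0) < e"
        by (simp add: dist_real_def)
    qed (rule \<open>d > 0\<close>)
  qed
  then show ?thesis
    by (simp add: continuous_on_eq_continuous_at continuous_at_eps_delta)
qed

lemma kernel_op_linearization:
  assumes g: "continuous_on UNIV g" and partial_cont: "\<And>i. continuous_on UNIV (partial i g)"
  shows "kernel_op K L (\<lambda>w. g w + h \<bullet> grad3 g w) x = kernel_op K L g x + h \<bullet> (\<chi> i. kernel_op K L (partial i g) x)"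
proof -
  have grad: "continuous_on UNIV (\<lambda>w. h \<bullet> grad3 g w)"
    unfolding grad3_def inner_vec_def by (intro continuous_intros partial_cont)
  have "kernel_op K L (\<lambda>w. h \<bullet> grad3 g w) x = (\<Sum>i\<in>UNIV. h $ i * kernel_op K L (partial i g) x)"
    unfolding grad3_def inner_vec_def
    by (simp add: kernel_op_sum kernel_op_cmult partial_cont continuous_intros)
  then show ?thesis
    by (simp only: kernel_op_add[OF g grad]) (simp add: inner_vec_def)
qed

lemma kernel_op_remainder_le:
  assumes g_diff: "\<And>y. g differentiable (at y)"
    and partial_cont: "\<And>i. continuous_on UNIV (partial i g)"
    and "e > 0"
  obtains d where "d > 0"
    and "\<And>h. norm h < d \<Longrightarrow>
      \<bar>kernel_op K L g (c + h) - kernel_op K L g c - h \<bullet> (\<chi> i. kernel_op K L (partial i g) c)\<bar> \<le> e * norm h"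
proof -
  define N where "N = (LINT z|lborel. \<bar>K z\<bar>)"
  have "N \<ge> 0"
    unfolding N_def by simp
  have g: "continuous_on UNIV g"
    using g_diff by (simp add: continuous_at_imp_continuous_on differentiable_imp_continuous_within)
  have grad: "continuous_on UNIV (grad3 g)"
    unfolding grad3_def by (intro continuous_on_vec_lambda partial_cont)
  have "e / (N + 1) > 0"
    using \<open>e > 0\<close> \<open>N \<ge> 0\<close> by simp
  then obtain d where "d > 0" "d \<le> 1"
    and close: "\<And>z x y. norm z \<le> R \<Longrightarrow> dist x c \<le> 1 \<Longrightarrow> dist y c \<le> 1 \<Longrightarrow> dist x y < d \<Longrightarrow>
      dist (grad3 g (x - L z)) (grad3 g (y - L z)) < e / (N + 1)"
    by (rule shift_uniformly_continuous[OF grad, where c=c]) blast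
  show ?thesis
  proof (rule that[OF \<open>d > 0\<close>])
    fix h :: "real^3"
    assume h: "norm h < d"
    have "\<bar>g (c - L z + h) - g (c - L z) - h \<bullet> grad3 g (c - L z)\<bar> \<le> e / (N + 1) * norm h"
      if z: "norm z \<le> R" for z
    proof (rule linearization_bound_grad3[OF g_diff _ h])
      fix w
      assume "w \<in> ball (c - L z) d"
      then have "dist (w + L z) c < d"
        by (simp add: dist_norm norm_minus_commute algebra_simps)
      then show "dist (grad3 g w) (grad3 g (c - L z)) \<le> e / (N + 1)"
        using close[OF z, of "w + L z" c] \<open>d \<le> 1\<close> by simp
    qed
    then have "\<bar>kernel_op K L g (c + h) - kernel_op K L (\<lambda>w. g w + h \<bullet> grad3 g w) c\<bar> \<le> e / (N + 1) * norm h * N"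
      by (intro kernel_op_diff_le[OF g _, folded N_def]) (auto intro!: continuous_intros g grad simp: algebra_simps)
    also have "\<dots> \<le> e * norm h"
      using \<open>e > 0\<close> \<open>N \<ge> 0\<close> by (simp add: field_simps mult_left_mono)
    finally show "\<bar>kernel_op K L g (c + h) - kernel_op K L g c - h \<bullet> (\<chi> i. kernel_op K L (partial i g) c)\<bar> \<le> e * norm h"
      by (simp add: kernel_op_linearization[OF g partial_cont])
  qed
qed

lemma has_derivative_kernel_op:
  assumes "\<And>y. g differentiable (at y)" and "\<And>i. continuous_on UNIV (partial i g)"
  shows "(kernel_op K L g has_derivative (\<lambda>h. h \<bullet> (\<chi> i. kernel_op K L (partial i g) x0))) (at x0)"
  unfolding has_derivative_at_alt
proof (intro conjI allI impI bounded_linear_inner_left)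
  fix e :: real
  assume "e > 0"
  then obtain d where "d > 0" and d: "\<And>h. norm h < d \<Longrightarrow>
      \<bar>kernel_op K L g (x0 + h) - kernel_op K L g x0 - h \<bullet> (\<chi> i. kernel_op K L (partial i g) x0)\<bar> \<le> e * norm h"
    by (rule kernel_op_remainder_le[OF assms, where c=x0]) blast
  show "\<exists>d>0. \<forall>y. norm (y - x0) < d \<longrightarrow> norm (kernel_op K L g y - kernel_op K L g x0
      - (y - x0) \<bullet> (\<chi> i. kernel_op K L (partial i g) x0)) \<le> e * norm (y - x0)"
  proof (intro exI[of _ d] conjI allI impI)
    fix y
    assume "norm (y - x0) < d"
    then show "norm (kernel_op K L g y - kernel_op K L g x0
        - (y - x0) \<bullet> (\<chi> i. kernel_op K L (partial i g) x0)) \<le> e * norm (y - x0)"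
      using d[of "y - x0"] by simp
  qed (rule \<open>d > 0\<close>)
qed

lemma partial_kernel_op:
  assumes "Ck (Suc k) g"
  shows "partial i (kernel_op K L g) = kernel_op K L (partial i g)"
proof
  fix x
  have "partial i (kernel_op K L g) x = axis i 1 \<bullet> (\<chi> j. kernel_op K L (partial j g) x)"
    by (rule partial_eq_has_derivative[OF has_derivative_kernel_op])
       (use assms Ck_Suc_differentiable Ck_Suc_continuous_on_partial in blast)+
  then show "partial i (kernel_op K L g) x = kernel_op K L (partial i g) x"
    by (simp add: inner_axis')
qed

lemma Ck_kernel_op: "Ck k g \<Longrightarrow> Ck k (kernel_op K L g)"
proof (induction k arbitrary: g)
  case 0
  then show ?case
    by (simp add: continuous_on_kernel_op)
next
  case (Suc k)
  have "kernel_op K L g differentiable (at y)" for y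
    using has_derivative_kernel_op Suc.prems Ck_Suc_differentiable Ck_Suc_continuous_on_partial
    by (meson differentiableI)
  moreover have "Ck k (partial i (kernel_op K L g))" for i
    using Suc by (simp add: partial_kernel_op[OF Suc.prems])
  ultimately show ?case
    using Suc.prems by (simp add: differentiable_on_def continuous_on_kernel_op Ck_continuous_on)
qed

lemma integrable_kernel_pair:
  fixes F :: "(real^3) \<times> (real^3) \<Rightarrow> real"
  assumes F: "continuous_on UNIV F"
    and bounded: "\<And>p. \<bar>F p\<bar> \<le> M"
    and vanishing: "\<And>x z. norm x > S \<Longrightarrow> F (x, z) = 0"
  shows "integrable (lborel \<Otimes>\<^sub>M lborel) (\<lambda>(x, z). K z * F (x, z))"
proof (rule Bochner_Integration.integrable_bound)
  let ?G = "\<lambda>(x::real^3, z). M * indicator (cball 0 S) x * \<bar>K z\<bar> :: real"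
  show "integrable (lborel \<Otimes>\<^sub>M lborel) ?G"
  proof (rule lborel_pair.Fubini_integrable)
    have "(\<lambda>p. indicator (cball 0 S) (fst p) :: real) \<in> borel_measurable (lborel \<Otimes>\<^sub>M lborel)"
      by (rule measurable_compose[OF measurable_fst]) (simp add: borel_measurable_indicator borel_closed)
    moreover have "(\<lambda>p. K (snd p)) \<in> borel_measurable (lborel \<Otimes>\<^sub>M lborel)"
      by (rule measurable_compose[OF measurable_snd]) simp
    ultimately show "?G \<in> borel_measurable (lborel \<Otimes>\<^sub>M lborel)"
      unfolding case_prod_beta by (intro borel_measurable_times borel_measurable_abs borel_measurable_const)
    have int: "integrable lborel (\<lambda>x. \<bar>M\<bar> * (LINT z|lborel. \<bar>K z\<bar>) * indicator (cball (0::real^3) S) x :: real)"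
      by (intro integrable_mult_right integrable_indicator_cball)
    have eq: "(LINT z|lborel. norm (?G (x, z))) = \<bar>M\<bar> * (LINT z|lborel. \<bar>K z\<bar>) * indicator (cball 0 S) x"
      for x
      by (auto simp: abs_mult indicator_def)
    show "integrable lborel (\<lambda>x. LINT z|lborel. norm (?G (x, z)))"
      unfolding eq by (rule int)
    show "AE x in lborel. integrable lborel (\<lambda>z. ?G (x, z))"
      using integrable_K by simp
  qed
  show "(\<lambda>(x, z). K z * F (x, z)) \<in> borel_measurable (lborel \<Otimes>\<^sub>M lborel)"
    using borel_measurable_continuous_onI[OF F] unfolding lborel_prod[symmetric] by measurable
  have "\<bar>K z * F (x, z)\<bar> \<le> \<bar>M * indicator (cball 0 S) x * \<bar>K z\<bar>\<bar>" for x z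
  proof (cases "norm x > S")
    case False
    then have "\<bar>K z\<bar> * \<bar>F (x, z)\<bar> \<le> \<bar>K z\<bar> * \<bar>M\<bar>"
      using bounded[of "(x, z)"] by (intro mult_left_mono) auto
    with False show ?thesis
      by (simp add: abs_mult indicator_def mult.commute)
  qed (simp add: vanishing)
  then show "AE p in lborel \<Otimes>\<^sub>M lborel. norm (case p of (x, z) \<Rightarrow> K z * F (x, z)) \<le> norm (?G p)"
    by (auto split: prod.split)
qed

lemma integral_kernel_op_mult:
  assumes a: "continuous_on UNIV a" and b: "continuous_on UNIV b"
    and a_vanishing: "\<And>x. norm x > Sa \<Longrightarrow> a x = 0"
    and b_vanishing: "\<And>x. norm x > Sb \<Longrightarrow> b x = 0"
  shows "(LINT x|lborel. kernel_op K L a x * b x) = (LINT y|lborel. a y * (LINT z|lborel. K z * b (y + L z)))"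
proof -
  obtain Ma Mb where Ma: "\<And>y. \<bar>a y\<bar> \<le> Ma" and Mb: "\<And>y. \<bar>b y\<bar> \<le> Mb"
    using bounded_vanishing_outside_ball[OF a a_vanishing] bounded_vanishing_outside_ball[OF b b_vanishing]
    by metis
  have ab: "\<bar>a y * b y'\<bar> \<le> Ma * Mb" for y y'
    unfolding abs_mult using Ma Mb by (intro mult_mono) (auto intro: order_trans[OF abs_ge_zero])
  have cont_L: "continuous_on UNIV L"
    by (rule linear_continuous_on[OF bounded_linear_L])
  have int1: "integrable (lborel \<Otimes>\<^sub>M lborel) (\<lambda>(x, z). K z * (a (x - L z) * b x))"
    using integrable_kernel_pair[of "\<lambda>p. a (fst p - L (snd p)) * b (fst p)" "Ma * Mb" Sb]
    by (simp add: ab b_vanishing case_prod_beta continuous_intros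
        continuous_on_compose2[OF a] continuous_on_compose2[OF b] continuous_on_compose2[OF cont_L])
  have int2: "integrable (lborel \<Otimes>\<^sub>M lborel) (\<lambda>(y, z). K z * (a y * b (L z + y)))"
    using integrable_kernel_pair[of "\<lambda>p. a (fst p) * b (L (snd p) + fst p)" "Ma * Mb" Sa]
    by (simp add: ab a_vanishing case_prod_beta continuous_intros
        continuous_on_compose2[OF a] continuous_on_compose2[OF b] continuous_on_compose2[OF cont_L])
  have "(LINT x|lborel. kernel_op K L a x * b x) = (LINT x|lborel. LINT z|lborel. K z * (a (x - L z) * b x))"
    unfolding kernel_op_def integral_mult_left_zero[symmetric] by (simp add: mult.assoc)
  also have "\<dots> = (LINT z|lborel. LINT x|lborel. K z * (a (x - L z) * b x))"
    using lborel_pair.Fubini_integral[OF int1] by simp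
  also have "\<dots> = (LINT z|lborel. LINT y|lborel. K z * (a y * b (L z + y)))"
  proof (rule Bochner_Integration.integral_cong[OF refl])
    fix z
    have "continuous_on UNIV (\<lambda>x. K z * (a (x - L z) * b x))"
      by (intro continuous_intros continuous_on_compose2[OF a] b) auto
    then have "(LINT y|lborel. K z * (a (L z + y - L z) * b (L z + y))) =
        (LINT x|lborel. K z * (a (x - L z) * b x))"
      by (rule integral_lborel_translate[OF borel_measurable_continuous_onI])
    then show "(LINT x|lborel. K z * (a (x - L z) * b x)) = (LINT y|lborel. K z * (a y * b (L z + y)))"
      by (simp only: add_diff_cancel_left')
  qed
  also have "\<dots> = (LINT y|lborel. LINT z|lborel. K z * (a y * b (L z + y)))"
    using lborel_pair.Fubini_integral[OF int2] by simp
  finally show ?thesis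
    unfolding integral_mult_right_zero[symmetric] by (simp add: add.commute mult.left_commute)
qed

lemma integral_kernel_op_mult_swap:
  assumes K_even: "\<And>z. K (- z) = K z"
    and a: "continuous_on UNIV a" and b: "continuous_on UNIV b"
    and a_vanishing: "\<And>x. norm x > Sa \<Longrightarrow> a x = 0"
    and b_vanishing: "\<And>x. norm x > Sb \<Longrightarrow> b x = 0"
  shows "(LINT x|lborel. kernel_op K L a x * b x) = (LINT x|lborel. a x * kernel_op K L b x)"
proof -
  have "(LINT z|lborel. K z * b (y + L z)) = kernel_op K L b y" for y
  proof -
    have "continuous_on UNIV (\<lambda>z. b (y + L z))"
      by (intro continuous_on_compose2[OF b] continuous_intros linear_continuous_on bounded_linear_L) auto
    then have "(LINT z|lborel. K (- z) * b (y + L (- z))) = (LINT z|lborel. K z * b (y + L z))"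
      by (intro integral_lborel_reflect borel_measurable_times borel_measurable_K borel_measurable_continuous_onI)
    then show ?thesis
      unfolding kernel_op_def by (simp add: K_even linear_neg[OF bounded_linear.linear[OF bounded_linear_L]])
  qed
  then show ?thesis
    using integral_kernel_op_mult[OF a b a_vanishing b_vanishing] by simp
qed

end

section \<open>Integration by parts\<close>

lemma integral_partial_eq_0:
  fixes h :: "real^3 \<Rightarrow> real"
  assumes h_diff: "\<And>y. h differentiable (at y)"
    and partial_cont: "\<And>i. continuous_on UNIV (partial i h)"
    and vanishing: "\<And>x. norm x > S \<Longrightarrow> h x = 0"
  shows "(LINT x|lborel. partial i h x) = 0"
proof -
  define R where "R = \<bar>S\<bar> + 1"
  have "bounded_linear (\<lambda>x::real^3. - x)"
    by (rule bounded_linear_minus[OF bounded_linear_ident])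
  then interpret translation: compact_kernel "indicator (cball 0 R)" uminus R
    by (intro compact_kernel.intro integrable_indicator_cball) simp_all
  let ?F = "kernel_op (indicator (cball 0 R)) uminus"
  (* For y near 0, ?F h y is the translation invariant integral of h, so ?F h is locally constant;
     differentiating under the integral instead gives the integral of partial i h. *)
  have F_eq: "?F f y = (LINT x|lborel. f x)"
    if "norm y < 1" and "\<And>x. norm x > S \<Longrightarrow> f x = 0" and "continuous_on UNIV f" for f y
  proof -
    have "?F f y = (LINT z|lborel. f (y + z))"
      unfolding kernel_op_def
    proof (rule Bochner_Integration.integral_cong[OF refl])
      fix z :: "real^3"
      have "norm (y + z) > S" if "norm z > R"
        using that \<open>norm y < 1\<close> norm_triangle_ineq4[of "y + z" y] abs_ge_self[of S]
        unfolding R_def by simp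
      then show "indicator (cball 0 R) z * f (y - - z) = f (y + z)"
        using \<open>\<And>x. norm x > S \<Longrightarrow> f x = 0\<close> by (auto simp: indicator_def not_le)
    qed
    also have "\<dots> = (LINT x|lborel. f x)"
      by (rule integral_lborel_translate) (rule borel_measurable_continuous_onI[OF \<open>continuous_on UNIV f\<close>])
    finally show ?thesis .
  qed
  have h: "continuous_on UNIV h"
    using h_diff by (simp add: continuous_at_imp_continuous_on differentiable_imp_continuous_within)
  have "((\<lambda>_. LINT x|lborel. h x) has_derivative (\<lambda>_. 0)) (at 0)"
    by simp
  then have "(?F h has_derivative (\<lambda>_. 0)) (at 0)"
    by (rule has_derivative_transform_within_open[where s="ball 0 1"])
       (use F_eq[OF _ vanishing h] in auto)
  then have "partial i (?F h) 0 = 0"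
    by (simp add: partial_eq_has_derivative)
  moreover have "partial i (?F h) 0 = ?F (partial i h) 0"
    using partial_eq_has_derivative[OF translation.has_derivative_kernel_op[OF h_diff partial_cont]]
    by (simp add: inner_axis')
  moreover have "?F (partial i h) 0 = (LINT x|lborel. partial i h x)"
    using partial_eq_0_outside_ball[OF vanishing] partial_cont by (intro F_eq) auto
  ultimately show ?thesis
    by simp
qed

lemma integral_partial_mult:
  fixes f g :: "real^3 \<Rightarrow> real"
  assumes f_diff: "\<And>y. f differentiable (at y)" and f_partial: "\<And>i. continuous_on UNIV (partial i f)"
    and f_vanishing: "\<And>x. norm x > S \<Longrightarrow> f x = 0"
    and g_diff: "\<And>y. g differentiable (at y)" and g_partial: "\<And>i. continuous_on UNIV (partial i g)"
  shows "(LINT x|lborel. partial i f x * g x) = - (LINT x|lborel. f x * partial i g x)"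
proof -
  have f: "continuous_on UNIV f" and g: "continuous_on UNIV g"
    using f_diff g_diff by (simp_all add: continuous_at_imp_continuous_on differentiable_imp_continuous_within)
  have product_rule: "partial j (\<lambda>x. f x * g x) = (\<lambda>x. f x * partial j g x + partial j f x * g x)" for j
    using partial_mult[OF f_diff g_diff] by blast
  have "(LINT x|lborel. partial i (\<lambda>x. f x * g x) x) = 0"
  proof (rule integral_partial_eq_0)
    show "continuous_on UNIV (partial j (\<lambda>x. f x * g x))" for j
      unfolding product_rule by (intro continuous_intros f g f_partial g_partial)
  qed (use f_diff g_diff f_vanishing in auto)
  moreover have "integrable lborel (\<lambda>x. f x * partial i g x)"
    by (rule integrable_vanishing_outside_ball[where S=S])
       (auto intro!: continuous_intros f g_partial simp: f_vanishing)
  moreover have "integrable lborel (\<lambda>x. partial i f x * g x)"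
    by (rule integrable_vanishing_outside_ball[where S=S])
       (auto intro!: continuous_intros g f_partial simp: partial_eq_0_outside_ball[OF f_vanishing])
  ultimately show ?thesis
    unfolding product_rule by simp
qed

context compact_kernel
begin

lemma smooth3_kernel_op: "smooth3 \<phi> \<Longrightarrow> smooth3 (kernel_op K L \<phi>)"
  unfolding smooth3_def using Ck_kernel_op by blast

lemma grad3_kernel_op:
  assumes "Ck (Suc k) \<phi>"
  shows "grad3 (kernel_op K L \<phi>) x = (\<chi> i. kernel_op K L (\<lambda>y. grad3 \<phi> y $ i) x)"
  unfolding grad3_def by (simp add: partial_kernel_op[OF assms])

lemma div3_kernel_op:
  assumes "\<And>i. Ck (Suc k) (\<lambda>y. \<psi> y $ i)"
  shows "div3 (\<lambda>x. \<chi> i. kernel_op K L (\<lambda>y. \<psi> y $ i) x) x = kernel_op K L (div3 \<psi>) x"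
  unfolding div3_def
  by (simp add: partial_kernel_op[OF assms] kernel_op_sum Ck_Suc_continuous_on_partial[OF assms])

lemma integral_grad3_kernel_op_inner:
  assumes K_even: "\<And>z. K (- z) = K z"
    and \<phi>: "Ck (Suc k) \<phi>" "compact_support \<phi>"
    and \<psi>: "\<And>i. Ck (Suc k) (\<lambda>y. \<psi> y $ i)" "compact_support \<psi>"
  shows "(LINT x|lborel. grad3 (kernel_op K L \<phi>) x \<bullet> \<psi> x)
    = - (LINT x|lborel. \<phi> x * div3 (\<lambda>x. \<chi> i. kernel_op K L (\<lambda>y. \<psi> y $ i) x) x)"
proof -
  obtain S\<phi> where S\<phi>: "\<And>x. norm x > S\<phi> \<Longrightarrow> \<phi> x = 0"
    using compact_support_imp_vanishing[OF \<phi>(2)] by blast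
  obtain S\<psi> where S\<psi>: "\<And>x i. norm x > S\<psi> \<Longrightarrow> \<psi> x $ i = 0"
    using compact_support_imp_vanishing[OF \<psi>(2)] by (metis zero_index)
  have "(LINT x|lborel. kernel_op K L (partial i \<phi>) x * \<psi> x $ i)
      = - (LINT x|lborel. \<phi> x * kernel_op K L (partial i (\<lambda>y. \<psi> y $ i)) x)" for i
  proof -
    have "(LINT x|lborel. kernel_op K L (partial i \<phi>) x * \<psi> x $ i)
        = (LINT x|lborel. partial i \<phi> x * kernel_op K L (\<lambda>y. \<psi> y $ i) x)"
      by (rule integral_kernel_op_mult_swap[OF K_even Ck_Suc_continuous_on_partial[OF \<phi>(1)]
            Ck_continuous_on[OF \<psi>(1)] partial_eq_0_outside_ball[OF S\<phi>] S\<psi>])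
    also have "\<dots> = - (LINT x|lborel. \<phi> x * partial i (kernel_op K L (\<lambda>y. \<psi> y $ i)) x)"
      by (rule integral_partial_mult[OF Ck_Suc_differentiable[OF \<phi>(1)] Ck_Suc_continuous_on_partial[OF \<phi>(1)]
            S\<phi> Ck_Suc_differentiable[OF Ck_kernel_op[OF \<psi>(1)]]
            Ck_Suc_continuous_on_partial[OF Ck_kernel_op[OF \<psi>(1)]]])
    finally show ?thesis
      by (simp add: partial_kernel_op[OF \<psi>(1)])
  qed
  moreover have "integrable lborel (\<lambda>x. kernel_op K L (partial i \<phi>) x * \<psi> x $ i)" for i
    by (rule integrable_vanishing_outside_ball[where S=S\<psi>])
       (auto intro!: continuous_on_mult continuous_on_kernel_op Ck_Suc_continuous_on_partial[OF \<phi>(1)]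
         Ck_continuous_on[OF \<psi>(1)] simp: S\<psi>)
  moreover have "integrable lborel (\<lambda>x. \<phi> x * kernel_op K L (partial i (\<lambda>y. \<psi> y $ i)) x)" for i
    by (rule integrable_vanishing_outside_ball[where S=S\<phi>])
       (auto intro!: continuous_on_mult continuous_on_kernel_op Ck_continuous_on[OF \<phi>(1)]
         Ck_Suc_continuous_on_partial[OF \<psi>(1)] simp: S\<phi>)
  ultimately show ?thesis
    unfolding grad3_def div3_def inner_vec_def
    by (simp add: partial_kernel_op[OF \<phi>(1)] partial_kernel_op[OF \<psi>(1)] sum_distrib_left sum_negf)
qed

end

section \<open>The kernel \<open>Q\<^sub>\<rho>\<close>\<close>

lemma ennreal_integral_le_nn_integral:
  fixes f :: "'a \<Rightarrow> real"
  assumes "\<And>x. f x \<ge> 0"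
  shows "ennreal (integral\<^sup>L M f) \<le> (\<integral>\<^sup>+x. ennreal (f x) \<partial>M)"
proof (cases "integrable M f")
  case True
  then show ?thesis
    using nn_integral_eq_integral[OF True] assms by simp
qed (simp add: not_integrable_integral_eq)

lemma nn_integral_lborel_scaleR:
  fixes g :: "'a::euclidean_space \<Rightarrow> ennreal"
  assumes c: "c > 0" and g[measurable]: "g \<in> borel_measurable borel"
  shows "(\<integral>\<^sup>+z. g (c *\<^sub>R z) \<partial>lborel) = ennreal (1 / c ^ DIM('a)) * (\<integral>\<^sup>+w. g w \<partial>lborel)"
proof -
  have "(\<integral>\<^sup>+w. g w \<partial>lborel) = ennreal (c ^ DIM('a)) * (\<integral>\<^sup>+z. g (c *\<^sub>R z) \<partial>lborel)"
    by (subst lborel_affine[of c 0])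
       (use c in \<open>simp_all add: nn_integral_density nn_integral_distr nn_integral_cmult\<close>)
  moreover have "ennreal (1 / c ^ DIM('a)) * ennreal (c ^ DIM('a)) = 1"
    using c by (simp flip: ennreal_mult)
  ultimately show ?thesis
    by (simp add: mult.assoc[symmetric])
qed

lemma nn_integral_inverse_power_4: "(\<integral>\<^sup>+s. ennreal (1 / s ^ 4) * indicator {1..} s \<partial>lborel) = ennreal (1 / 3)"
proof -
  have "((\<lambda>x::real. 1 / x ^ 4) has_integral 1 / (real (4 - 1) * 1 ^ (4 - 1))) {1..}"
    by (rule has_integral_inverse_power_to_inf) auto
  then have "((\<lambda>x::real. 1 / x ^ 4) has_integral 1 / 3) {1..}"
    by simp
  from nn_integral_has_integral_lebesgue'[OF _ this] show ?thesis
    by simp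
qed

locale radial_profile =
  fixes rho :: "real \<Rightarrow> real"
  assumes rho_nonneg: "\<And>r. r > 0 \<Longrightarrow> rho r \<ge> 0"
    and rho_eq_0: "\<And>t. t > 1 \<Longrightarrow> rho t = 0"
    and continuous_on_rho: "continuous_on {0<..} rho"
    and integrable_rho_norm: "integrable lborel (\<lambda>z::real^3. rho (norm z))"
begin

text \<open>Nothing is assumed about \<open>rho\<close> on \<open>(-\<infinity>, 0]\<close>, where it need not even be
  measurable; \<open>rho_pos\<close> is the measurable profile that actually enters \<open>Qrho\<close>.\<close>

definition rho_pos :: "real \<Rightarrow> real" where
  "rho_pos t = indicator {0<..} t *\<^sub>R rho t"

lemma borel_measurable_rho_pos [measurable]: "rho_pos \<in> borel_measurable borel"
  unfolding rho_pos_def[abs_def]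
  by (rule borel_measurable_continuous_on_indicator) (auto intro: continuous_on_rho)

lemma rho_pos_nonneg: "rho_pos t \<ge> 0"
  unfolding rho_pos_def using rho_nonneg by (auto simp: indicator_def)

lemma Qrho_eq: "Qrho rho z = (LINT t|lborel. (if norm z \<le> t then rho_pos t / t else 0))"
  unfolding Qrho_def set_lebesgue_integral_def
proof (rule Bochner_Integration.integral_cong[OF refl])
  fix t :: real
  show "indicator {norm z..} t *\<^sub>R (rho t / t) = (if norm z \<le> t then rho_pos t / t else 0)"
  proof (cases "norm z \<le> t")
    case True
    then have "t \<ge> 0"
      using norm_ge_zero order_trans by blast
    with True show ?thesis
      by (cases "t = 0") (auto simp: rho_pos_def indicator_def)
  qed (simp add: indicator_def)
qed

lemma borel_measurable_Qrho [measurable]: "Qrho rho \<in> borel_measurable borel"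
  unfolding Qrho_eq[abs_def] by (rule lborel.borel_measurable_lebesgue_integral) measurable

lemma Qrho_integrand_nonneg: "(if norm z \<le> t then rho_pos t / t else 0) \<ge> 0"
  by (auto intro!: divide_nonneg_nonneg rho_pos_nonneg intro: order_trans[OF norm_ge_zero])

lemma Qrho_nonneg: "Qrho rho z \<ge> 0"
  unfolding Qrho_eq by (rule Bochner_Integration.integral_nonneg) (rule Qrho_integrand_nonneg)

lemma Qrho_eq_0:
  assumes "norm z > 1"
  shows "Qrho rho z = 0"
proof -
  have "(\<lambda>t. if norm z \<le> t then rho_pos t / t else 0) = (\<lambda>t. 0)"
    using assms by (auto simp: fun_eq_iff rho_pos_def rho_eq_0)
  then show ?thesis
    unfolding Qrho_eq by simp
qed

lemma Qrho_uminus: "Qrho rho (- z) = Qrho rho z"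
  unfolding Qrho_def by simp

lemma nn_integral_Qrho_substitution:
  fixes z :: "real^3"
  assumes "z \<noteq> 0"
  shows "(\<integral>\<^sup>+t. ennreal (if norm z \<le> t then rho_pos t / t else 0) \<partial>lborel)
       = (\<integral>\<^sup>+s. ennreal (if 1 \<le> s then rho_pos (s * norm z) / s else 0) \<partial>lborel)"
proof -
  define r where "r = norm z"
  have r: "r > 0"
    using assms r_def by simp
  have "(\<integral>\<^sup>+t. ennreal (if r \<le> t then rho_pos t / t else 0) \<partial>lborel)
      = ennreal \<bar>r\<bar> * (\<integral>\<^sup>+s. ennreal (if r \<le> 0 + r * s then rho_pos (0 + r * s) / (0 + r * s) else 0) \<partial>lborel)"
    by (rule nn_integral_real_affine) (use r in auto)
  also have "\<dots> = (\<integral>\<^sup>+s. ennreal (if 1 \<le> s then rho_pos (s * r) / s else 0) \<partial>lborel)"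
    using r by (subst nn_integral_cmult[symmetric])
      (auto intro!: nn_integral_cong simp: ennreal_mult[symmetric] rho_pos_nonneg mult.commute)
  finally show ?thesis
    unfolding r_def .
qed

lemma ennreal_Qrho_le:
  fixes z :: "real^3"
  assumes "z \<noteq> 0"
  shows "ennreal (Qrho rho z) \<le> (\<integral>\<^sup>+s. ennreal (if 1 \<le> s then rho_pos (s * norm z) / s else 0) \<partial>lborel)"
proof -
  have "ennreal (Qrho rho z) \<le> (\<integral>\<^sup>+t. ennreal (if norm z \<le> t then rho_pos t / t else 0) \<partial>lborel)"
    unfolding Qrho_eq by (rule ennreal_integral_le_nn_integral) (rule Qrho_integrand_nonneg)
  also have "\<dots> = (\<integral>\<^sup>+s. ennreal (if 1 \<le> s then rho_pos (s * norm z) / s else 0) \<partial>lborel)"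
    by (rule nn_integral_Qrho_substitution[OF assms])
  finally show ?thesis .
qed

lemma nn_integral_rho_pos_finite: "(\<integral>\<^sup>+w. ennreal (rho_pos (norm (w::real^3))) \<partial>lborel) < \<infinity>"
proof -
  have "(\<integral>\<^sup>+w. ennreal (rho_pos (norm (w::real^3))) \<partial>lborel)
      \<le> (\<integral>\<^sup>+w. ennreal (norm (rho (norm (w::real^3)))) \<partial>lborel)"
    by (intro nn_integral_mono ennreal_leI) (simp add: rho_pos_def indicator_def abs_ge_self)
  also have "\<dots> < \<infinity>"
    using integrable_rho_norm unfolding integrable_iff_bounded by blast
  finally show ?thesis .
qed

lemma nn_integral_rho_pos_scaled:
  "(\<integral>\<^sup>+z. ennreal (if 1 \<le> s then rho_pos (s * norm (z::real^3)) / s else 0) \<partial>lborel)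
    = ennreal (1 / s ^ 4) * indicator {1..} s * (\<integral>\<^sup>+w. ennreal (rho_pos (norm (w::real^3))) \<partial>lborel)"
proof (cases "1 \<le> s")
  case True
  then have "(\<integral>\<^sup>+z. ennreal (if 1 \<le> s then rho_pos (s * norm (z::real^3)) / s else 0) \<partial>lborel)
      = ennreal (1 / s) * (\<integral>\<^sup>+z. ennreal (rho_pos (norm (s *\<^sub>R (z::real^3)))) \<partial>lborel)"
    by (subst nn_integral_cmult[symmetric])
       (auto intro!: nn_integral_cong simp: ennreal_mult[symmetric] rho_pos_nonneg abs_of_pos)
  also have "\<dots> = ennreal (1 / s) * (ennreal (1 / s ^ 3) * (\<integral>\<^sup>+w. ennreal (rho_pos (norm (w::real^3))) \<partial>lborel))"
    using True by (subst nn_integral_lborel_scaleR) auto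
  finally show ?thesis
    using True by (simp add: mult.assoc[symmetric] ennreal_mult[symmetric] power_eq_if)
qed simp

lemma integrable_Qrho: "integrable lborel (Qrho rho)"
proof (rule integrableI_nonneg)
  define G where "G z s = ennreal (if 1 \<le> s then rho_pos (s * norm z) / s else 0)" for z :: "real^3" and s
  have "(\<integral>\<^sup>+z. ennreal (Qrho rho z) \<partial>lborel) \<le> (\<integral>\<^sup>+z. (\<integral>\<^sup>+s. G z s \<partial>lborel) \<partial>lborel)"
    using AE_lborel_singleton[of "0::real^3"]
    by (intro nn_integral_mono_AE) (auto simp: G_def ennreal_Qrho_le)
  also have "\<dots> = (\<integral>\<^sup>+s. (\<integral>\<^sup>+z. G z s \<partial>lborel) \<partial>lborel)"
    by (rule lborel_pair.Fubini'[symmetric]) (simp add: G_def[abs_def])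
  also have "\<dots> = (\<integral>\<^sup>+s. ennreal (1 / s ^ 4) * indicator {1..} s \<partial>lborel)
      * (\<integral>\<^sup>+w. ennreal (rho_pos (norm (w::real^3))) \<partial>lborel)"
    unfolding G_def nn_integral_rho_pos_scaled by (rule nn_integral_multc) measurable
  also have "\<dots> < \<infinity>"
    using nn_integral_rho_pos_finite by (simp add: nn_integral_inverse_power_4 ennreal_mult_less_top)
  finally show "(\<integral>\<^sup>+z. ennreal (Qrho rho z) \<partial>lborel) < \<infinity>" .
qed (use borel_measurable_Qrho Qrho_nonneg in auto)

end

lemma kernel_hyps_eq_0:
  assumes "kernel_hyps rhorad \<eta>0 \<nu> \<sigma> \<gamma>" and "t > 1"
  shows "rhorad t = 0"
proof (rule ccontr)
  have support: "closure {z::real^3. z \<noteq> 0 \<and> rhorad (norm z) \<noteq> 0} = cball 0 1"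
    using assms(1) unfolding kernel_hyps_def by (elim conjE) assumption
  assume "rhorad t \<noteq> 0"
  define z :: "real^3" where "z = t *\<^sub>R axis 1 1"
  have "norm z = t"
    using assms(2) by (simp add: z_def)
  with \<open>rhorad t \<noteq> 0\<close> assms(2) have "z \<in> {z::real^3. z \<noteq> 0 \<and> rhorad (norm z) \<noteq> 0}"
    by auto
  then have "z \<in> closure {z::real^3. z \<noteq> 0 \<and> rhorad (norm z) \<noteq> 0}"
    by (rule subsetD[OF closure_subset])
  then have "z \<in> cball 0 1"
    by (simp only: support)
  then show False
    using \<open>norm z = t\<close> assms(2) by simp
qed

lemma kernel_hyps_continuous_on:
  assumes "kernel_hyps rhorad \<eta>0 \<nu> \<sigma> \<gamma>"
  shows "continuous_on {0<..} rhorad"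
proof -
  have smooth: "\<forall>k. \<forall>r>0. (((deriv ^^ k) (\<lambda>t. t * rhorad t)) has_real_derivative
      ((deriv ^^ Suc k) (\<lambda>t. t * rhorad t)) r) (at r)"
    using assms unfolding kernel_hyps_def by (elim conjE) assumption
  have "isCont (\<lambda>t. t * rhorad t / t) r" if "r > 0" for r
  proof -
    have "((deriv ^^ 0) (\<lambda>t. t * rhorad t) has_real_derivative (deriv ^^ Suc 0) (\<lambda>t. t * rhorad t) r) (at r)"
      using smooth that by blast
    then have "isCont (\<lambda>t. t * rhorad t) r"
      by (simp add: DERIV_isCont)
    then show ?thesis
      using that by (intro isCont_divide continuous_ident) auto
  qed
  then have "continuous_on {0<..} (\<lambda>t. t * rhorad t / t)"
    by (intro continuous_at_imp_continuous_on) auto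
  then show ?thesis
    by (rule continuous_on_cong[THEN iffD1, rotated 2]) auto
qed

lemma kernel_hyps_radial_profile:
  assumes "kernel_hyps rhorad \<eta>0 \<nu> \<sigma> \<gamma>"
  shows "radial_profile rhorad"
proof
  have "\<forall>r>0. rhorad r \<ge> 0"
    using assms unfolding kernel_hyps_def by (elim conjE) assumption
  then show "rhorad r \<ge> 0" if "r > 0" for r
    using that by blast
  show "integrable lborel (\<lambda>z::real^3. rhorad (norm z))"
    using assms unfolding kernel_hyps_def by (elim conjE) assumption
  show "rhorad t = 0" if "t > 1" for t
    by (rule kernel_hyps_eq_0[OF assms that])
  show "continuous_on {0<..} rhorad"
    by (rule kernel_hyps_continuous_on[OF assms])
qed

lemma bounded_linear_Tmat: "bounded_linear (Tmat rb r3)"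
proof -
  have "linear (Tmat rb r3)"
    by (rule linearI) (simp_all add: Tmat_def vec_eq_iff algebra_simps)
  then show ?thesis
    by (rule linear_conv_bounded_linear[THEN iffD1])
qed

theorem lemma2p2:
  fixes rhorad :: "real \<Rightarrow> real" and \<eta>0 \<nu> \<sigma> \<gamma> db d3 :: real
  assumes hyps: "kernel_hyps rhorad \<eta>0 \<nu> \<sigma> \<gamma>"
    and delta: "0 \<le> db" "db \<le> 1" "0 \<le> d3" "d3 \<le> 1"
  shows "(\<forall>\<phi>. smooth3 \<phi> \<longrightarrow> smooth3 (Qop rhorad db d3 \<phi>))
    \<and> (\<forall>\<phi>. smooth3 \<phi> \<longrightarrow> (\<forall>x. grad3 (Qop rhorad db d3 \<phi>) x = Qop_vec rhorad db d3 (grad3 \<phi>) x))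
    \<and> (\<forall>\<psi>. smooth3_field \<psi> \<longrightarrow> (\<forall>x. div3 (Qop_vec rhorad db d3 \<psi>) x = Qop rhorad db d3 (div3 \<psi>) x))
    \<and> (\<forall>\<phi> \<psi>. smooth3 \<phi> \<and> compact_support \<phi> \<and> smooth3_field \<psi> \<and> compact_support \<psi> \<longrightarrow>
         (LINT x|lborel. grad3 (Qop rhorad db d3 \<phi>) x \<bullet> \<psi> x)
           = - (LINT x|lborel. \<phi> x * div3 (Qop_vec rhorad db d3 \<psi>) x))"
proof -
  interpret radial_profile rhorad
    using hyps by (rule kernel_hyps_radial_profile)
  interpret compact_kernel "Qrho rhorad" "Tmat db d3" 1
    by (rule compact_kernel.intro[OF integrable_Qrho Qrho_eq_0 bounded_linear_Tmat])
  have Qop: "Qop rhorad db d3 = kernel_op (Qrho rhorad) (Tmat db d3)"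
    by (intro ext) (simp add: Qop_def kernel_op_def)
  have Qop_vec: "Qop_vec rhorad db d3 F = (\<lambda>x. \<chi> i. kernel_op (Qrho rhorad) (Tmat db d3) (\<lambda>y. F y $ i) x)"
    for F by (rule ext) (simp add: Qop_vec_def Qop)
  have C1: "Ck (Suc 0) f" if "smooth3 f" for f
    using that unfolding smooth3_def by blast
  show ?thesis
    unfolding Qop Qop_vec smooth3_field_def
    using smooth3_kernel_op grad3_kernel_op[OF C1] div3_kernel_op[where k=0, OF C1]
      integral_grad3_kernel_op_inner[where k=0, OF Qrho_uminus C1 _ C1]
    by blast
qed

end
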